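(* Every admissible Novikov algebra is an anti-pre-Lie algebra.
   Context: All vector spaces are finite-dimensional over a field $\mathbb F$ of characteristic $0$. For a bilinear operation $\circ$ on $A$ write $[x,y]=x\circ y-y\circ x$. An anti-pre-Lie algebra is $(A,\circ)$ such that for all $x,y,z$: (i) $x\circ(y\circ z)-y\circ(x\circ z)=[y,x]\circ z$, and (ii) $[x,y]\circ z+[y,z]\circ x+[z,x]\circ y=0$. An admissible Novikov algebra is $(A,\circ)$ satisfying (i) and $2x\circ[y,z]=(x\circ y)\circ z-(x\circ z)\circ y$ for all $x,y,z\in A$. *)

theory Defs
  imports Complex_Main
begin

definition bilinear_op ::
  "('k::field \<Rightarrow> 'v::ab_group_add \<Rightarrow> 'v) \<Rightarrow> ('v \<Rightarrow> 'v \<Rightarrow> 'v) \<Rightarrow> bool" where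
  "bilinear_op scale m \<longleftrightarrow>
     (\<forall>x y z. m (x + y) z = m x z + m y z) \<and>
     (\<forall>x y z. m x (y + z) = m x y + m x z) \<and>
     (\<forall>a x y. m (scale a x) y = scale a (m x y)) \<and>
     (\<forall>a x y. m x (scale a y) = scale a (m x y))"

definition comm :: "('v::ab_group_add \<Rightarrow> 'v \<Rightarrow> 'v) \<Rightarrow> 'v \<Rightarrow> 'v \<Rightarrow> 'v" where
  "comm m x y = m x y - m y x"

definition anti_pre_Lie :: "('v::ab_group_add \<Rightarrow> 'v \<Rightarrow> 'v) \<Rightarrow> bool" where
  "anti_pre_Lie m \<longleftrightarrow>
     (\<forall>x y z. m x (m y z) - m y (m x z) = m (comm m y x) z) \<and>
     (\<forall>x y z. m (comm m x y) z + m (comm m y z) x + m (comm m z x) y = 0)"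

definition admissible_Novikov :: "('v::ab_group_add \<Rightarrow> 'v \<Rightarrow> 'v) \<Rightarrow> bool" where
  "admissible_Novikov m \<longleftrightarrow>
     (\<forall>x y z. m x (m y z) - m y (m x z) = m (comm m y x) z) \<and>
     (\<forall>x y z. m x (comm m y z) + m x (comm m y z) = m (m x y) z - m (m x z) y)"

end

theory Submission
  imports Defs
begin

text \<open>Write \<open>S\<close> for the cyclic sum of \<open>[x,y]\<circ>z\<close> and \<open>T\<close> for the cyclic sum of
  \<open>x\<circ>[y,z]\<close>. Summing the second admissible Novikov identity cyclically gives \<open>2T = S\<close>,
  and summing identity (i) cyclically gives \<open>T = -S\<close>. Hence \<open>3S = 0\<close>, so \<open>S = 0\<close> in
  characteristic \<open>0\<close>, which is identity (ii).\<close>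

definition cyclic_comm_left :: "('v::ab_group_add \<Rightarrow> 'v \<Rightarrow> 'v) \<Rightarrow> 'v \<Rightarrow> 'v \<Rightarrow> 'v \<Rightarrow> 'v" where
  "cyclic_comm_left m x y z = m (comm m x y) z + m (comm m y z) x + m (comm m z x) y"

definition cyclic_comm_right :: "('v::ab_group_add \<Rightarrow> 'v \<Rightarrow> 'v) \<Rightarrow> 'v \<Rightarrow> 'v \<Rightarrow> 'v \<Rightarrow> 'v" where
  "cyclic_comm_right m x y z = m x (comm m y z) + m y (comm m z x) + m z (comm m x y)"

lemma vector_space_add3_eq_0_imp:
  fixes scale :: "'k::field_char_0 \<Rightarrow> 'v::ab_group_add \<Rightarrow> 'v" and v :: 'v
  assumes "vector_space scale" and "v + v + v = 0"
  shows "v = 0"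
proof -
  interpret vector_space scale by fact
  have "v = scale (1/3 + 1/3 + 1/3) v" by simp
  also have "\<dots> = scale (1/3) (v + v + v)" by (simp only: scale_left_distrib scale_right_distrib)
  finally show ?thesis using assms(2) by simp
qed

lemma bilinear_op_diff_left:
  assumes "bilinear_op scale m"
  shows "m (x - y) z = m x z - m y z"
  using assms unfolding bilinear_op_def by (metis eq_diff_eq)

lemma bilinear_op_diff_right:
  assumes "bilinear_op scale m"
  shows "m x (y - z) = m x y - m x z"
  using assms unfolding bilinear_op_def by (metis eq_diff_eq)

lemma bilinear_op_minus_left:
  assumes "bilinear_op scale m"
  shows "m (- x) z = - m x z"
  using bilinear_op_diff_left[OF assms, of 0 x z] bilinear_op_diff_left[OF assms, of 0 0 z] by simp

lemma cyclic_comm_left_eq: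
  assumes "bilinear_op scale m"
  shows "cyclic_comm_left m x y z =
    (m (m x y) z - m (m x z) y) + (m (m y z) x - m (m y x) z) + (m (m z x) y - m (m z y) x)"
  unfolding cyclic_comm_left_def comm_def bilinear_op_diff_left[OF assms] by (simp add: algebra_simps)

lemma cyclic_comm_right_eq:
  assumes "bilinear_op scale m"
  shows "cyclic_comm_right m x y z =
    (m x (m y z) - m y (m x z)) + (m y (m z x) - m z (m y x)) + (m z (m x y) - m x (m z y))"
  unfolding cyclic_comm_right_def comm_def bilinear_op_diff_right[OF assms] by (simp add: algebra_simps)

lemma admissible_Novikov_cyclic_comm_left:
  assumes "bilinear_op scale m" and "admissible_Novikov m"
  shows "cyclic_comm_left m x y z = cyclic_comm_right m x y z + cyclic_comm_right m x y z"
proof -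
  have Novikov: "m (m a b) c - m (m a c) b = m a (comm m b c) + m a (comm m b c)" for a b c
    using assms(2) unfolding admissible_Novikov_def by simp
  show ?thesis
    unfolding cyclic_comm_left_eq[OF assms(1)] Novikov cyclic_comm_right_def
    by (simp add: algebra_simps)
qed

lemma admissible_Novikov_cyclic_comm_right:
  assumes "bilinear_op scale m" and "admissible_Novikov m"
  shows "cyclic_comm_right m x y z = - cyclic_comm_left m x y z"
proof -
  have identity_i: "m a (m b c) - m b (m a c) = m (comm m b a) c" for a b c
    using assms(2) unfolding admissible_Novikov_def by simp
  have comm_swap: "m (comm m b a) c = - m (comm m a b) c" for a b c
    using bilinear_op_minus_left[OF assms(1), of "comm m a b" c] unfolding comm_def by simp
  have "cyclic_comm_right m x y z = m (comm m y x) z + m (comm m z y) x + m (comm m x z) y"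
    unfolding cyclic_comm_right_eq[OF assms(1)] identity_i ..
  also have "\<dots> = - cyclic_comm_left m x y z"
    unfolding comm_swap[of y x] comm_swap[of z y] comm_swap[of x z] cyclic_comm_left_def
    by (simp add: algebra_simps)
  finally show ?thesis .
qed

theorem proposition3p3:
  fixes scale :: "'k::field_char_0 \<Rightarrow> 'v::ab_group_add \<Rightarrow> 'v"
    and basis :: "'v set"
    and m :: "'v \<Rightarrow> 'v \<Rightarrow> 'v"
  assumes "finite_dimensional_vector_space scale basis"
    and "bilinear_op scale m"
    and "admissible_Novikov m"
  shows "anti_pre_Lie m"
proof -
  have "vector_space scale"
    using assms(1) by (simp add: finite_dimensional_vector_space_def)
  have "cyclic_comm_left m x y z = 0" for x y z
  proof (rule vector_space_add3_eq_0_imp[OF \<open>vector_space scale\<close>])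
    show "cyclic_comm_left m x y z + cyclic_comm_left m x y z + cyclic_comm_left m x y z = 0"
      using admissible_Novikov_cyclic_comm_left[OF assms(2,3), of x y z]
        admissible_Novikov_cyclic_comm_right[OF assms(2,3), of x y z]
      by (simp add: algebra_simps)
  qed
  with assms(3) show ?thesis
    unfolding anti_pre_Lie_def admissible_Novikov_def cyclic_comm_left_def by blast
qed

end
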